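(* Let $n\geq 3$ and $c\geq 1$, and let $\upsilon: UV_n(c)\to \mathrm{GL}_n(\mathbb{C})$ be a nontrivial homogeneous $2$-local representation. Then, up to equivalence of representations, $\upsilon$ is given by \[ \upsilon(\rho_i)=\begin{pmatrix} I_{i-1}&0&0\\ 0&\begin{pmatrix}0&r_2\\ \frac{1}{r_2}&0\end{pmatrix}&0\\ 0&0&I_{n-i-1}\end{pmatrix},\qquad \upsilon(\sigma_{i,t})=\begin{pmatrix} I_{i-1}&0&0\\ 0&\begin{pmatrix}s_{1,t}&s_{2,t}\\ s_{3,t}&s_{4,t}\end{pmatrix}&0\\ 0&0&I_{n-i-1}\end{pmatrix} \] for all $1\le i\le n-1$ and $1\le t\le c$, where $r_2,s_{1,t},s_{2,t},s_{3,t},s_{4,t}\in\mathbb{C}$ satisfy $r_2\neq 0$ and $s_{1,t}s_{4,t}-s_{2,t}s_{3,t}\neq 0$.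
   Context: For $n\ge 2$, $c\ge 1$, the universal virtual braid group $UV_n(c)$ is the group with generators $\rho_i$ ($1\le i\le n-1$) and $\sigma_{i,t}$ ($1\le i\le n-1$, $1\le t\le c$) and relations: $\rho_i\rho_{i+1}\rho_i=\rho_{i+1}\rho_i\rho_{i+1}$ ($1\le i\le n-2$); $\rho_i\rho_j=\rho_j\rho_i$ ($|i-j|\ge 2$); $\rho_i^2=1$; $\sigma_{i,t}\sigma_{j,\ell}=\sigma_{j,\ell}\sigma_{i,t}$ ($|i-j|\ge2$, $1\le t,\ell\le c$); $\sigma_{i,t}\rho_j=\rho_j\sigma_{i,t}$ ($|i-j|\ge 2$); $\rho_i\rho_{i+1}\sigma_{i,t}=\sigma_{i+1,t}\rho_i\rho_{i+1}$ ($1\le i\le n-2$, $1\le t\le c$). A representation $\theta:UV_n(c)\to\mathrm{GL}_{n}(\mathbb{C})$ is called homogeneous $2$-local if there are matrices $R, S_1,\dots,S_c\in \mathrm{GL}_2(\mathbb{C})$ such that for all $i,t$, $\theta(\rho_i)=\mathrm{diag}(I_{i-1},R,I_{n-i-1})$ and $\theta(\sigma_{i,t})=\mathrm{diag}(I_{i-1},S_t,I_{n-i-1})$ (block diagonal), where $I_r$ is the $r\times r$ identity matrix. It is nontrivial if it is not the trivial representation (all generators sent to the identity). Two representations are equivalent if they are conjugate by a fixed invertible matrix. *)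

theory Defs
  imports Complex_Main "Jordan_Normal_Form.Matrix" "Jordan_Normal_Form.Determinant"
begin

text \<open>The n x n block-diagonal matrix diag(I_{i-1}, A, I_{n-i-1}) for a 2x2 matrix A
  and 1 <= i <= n-1. Rows/columns are 0-indexed, so the block A occupies
  rows and columns i-1 and i.\<close>
definition local2 :: "nat \<Rightarrow> nat \<Rightarrow> complex mat \<Rightarrow> complex mat" where
  "local2 n i A = mat n n (\<lambda>(j,k).
     if j \<in> {i-1, i} \<and> k \<in> {i-1, i} then A $$ (j + 1 - i, k + 1 - i)
     else if j = k then 1 else 0)"

definition mat2 :: "complex \<Rightarrow> complex \<Rightarrow> complex \<Rightarrow> complex \<Rightarrow> complex mat" where
  "mat2 a b c d = mat_of_rows_list 2 [[a, b], [c, d]]"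

text \<open>A homogeneous 2-local representation of UV_n(c) into GL_n(C) is determined by
  R, S_1, ..., S_c in GL_2(C); the assignment rho_i |-> local2 n i R,
  sigma_{i,t} |-> local2 n i (S t) extends to a homomorphism on UV_n(c) iff the images
  satisfy the defining relations of UV_n(c) (universal property of presentations).\<close>
definition homog_2local_rep :: "nat \<Rightarrow> nat \<Rightarrow> complex mat \<Rightarrow> (nat \<Rightarrow> complex mat) \<Rightarrow> bool" where
  "homog_2local_rep n c R S \<longleftrightarrow>
     R \<in> carrier_mat 2 2 \<and> invertible_mat R \<and>
     (\<forall>t\<in>{1..c}. S t \<in> carrier_mat 2 2 \<and> invertible_mat (S t)) \<and>
     (let rho = (\<lambda>i. local2 n i R); sig = (\<lambda>i t. local2 n i (S t)) in
       (\<forall>i. 1 \<le> i \<and> i \<le> n - 2 \<longrightarrow>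
           rho i * rho (i+1) * rho i = rho (i+1) * rho i * rho (i+1)) \<and>
       (\<forall>i j. 1 \<le> i \<and> i \<le> n - 1 \<and> 1 \<le> j \<and> j \<le> n - 1 \<and> (i + 2 \<le> j \<or> j + 2 \<le> i) \<longrightarrow>
           rho i * rho j = rho j * rho i) \<and>
       (\<forall>i. 1 \<le> i \<and> i \<le> n - 1 \<longrightarrow> rho i * rho i = 1\<^sub>m n) \<and>
       (\<forall>i j t l. 1 \<le> i \<and> i \<le> n - 1 \<and> 1 \<le> j \<and> j \<le> n - 1 \<and> (i + 2 \<le> j \<or> j + 2 \<le> i)
           \<and> t \<in> {1..c} \<and> l \<in> {1..c} \<longrightarrow> sig i t * sig j l = sig j l * sig i t) \<and>
       (\<forall>i j t. 1 \<le> i \<and> i \<le> n - 1 \<and> 1 \<le> j \<and> j \<le> n - 1 \<and> (i + 2 \<le> j \<or> j + 2 \<le> i)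
           \<and> t \<in> {1..c} \<longrightarrow> sig i t * rho j = rho j * sig i t) \<and>
       (\<forall>i t. 1 \<le> i \<and> i \<le> n - 2 \<and> t \<in> {1..c} \<longrightarrow>
           rho i * rho (i+1) * sig i t = sig (i+1) t * rho i * rho (i+1)))"

definition nontrivial_rep :: "nat \<Rightarrow> nat \<Rightarrow> complex mat \<Rightarrow> (nat \<Rightarrow> complex mat) \<Rightarrow> bool" where
  "nontrivial_rep n c R S \<longleftrightarrow>
     \<not> ((\<forall>i\<in>{1..n-1}. local2 n i R = 1\<^sub>m n) \<and>
        (\<forall>i\<in>{1..n-1}. \<forall>t\<in>{1..c}. local2 n i (S t) = 1\<^sub>m n))"

end

theory Submission
  imports Defs
begin

(* Everything happens in the top-left 3 x 3 corner, where rho_1, rho_2, sigma_{1,t}, sigma_{2,t} act.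
   There rho_1^2 = 1 and rho_1 rho_2 rho_1 = rho_2 rho_1 rho_2 leave only two possibilities for
   R = [[a, b], [c, d]]: either R = I, or a = d = 0 and b c = 1.  If R = I, the mixed relation
   rho_1 rho_2 sigma_{1,t} = sigma_{2,t} rho_1 rho_2 says that S_t placed at positions 1 and 2 gives
   the same matrix, which forces S_t = I, so the representation is trivial.  Hence R already has the
   required shape and no change of basis is needed (P = Q = I), while the S_t, being invertible,
   have nonzero determinant. *)

lemma local2_carrier [simp]: "local2 n i A \<in> carrier_mat n n"
  unfolding local2_def by auto

lemma dim_local2 [simp]: "dim_row (local2 n i A) = n" "dim_col (local2 n i A) = n"
  unfolding local2_def by auto

lemma index_local2:
  "j < n \<Longrightarrow> k < n \<Longrightarrow> local2 n i A $$ (j, k) =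
    (if j \<in> {i - 1, i} \<and> k \<in> {i - 1, i} then A $$ (j + 1 - i, k + 1 - i)
     else if j = k then 1 else 0)"
  unfolding local2_def by simp

lemma index_mult_local2:
  assumes M: "M \<in> carrier_mat n n" and i: "1 \<le> i" "i < n" and jk: "j < n" "k < n"
  shows "(M * local2 n i A) $$ (j, k) =
    (if k = i - 1 then M $$ (j, i - 1) * A $$ (0, 0) + M $$ (j, i) * A $$ (1, 0)
     else if k = i then M $$ (j, i - 1) * A $$ (0, 1) + M $$ (j, i) * A $$ (1, 1)
     else M $$ (j, k))"
proof -
  let ?f = "\<lambda>l. M $$ (j, l) * local2 n i A $$ (l, k)"
  have prod: "(M * local2 n i A) $$ (j, k) = (\<Sum>l<n. ?f l)"
    using M jk by (simp add: index_mult_mat scalar_prod_def atLeast0LessThan)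
  show ?thesis
  proof (cases "k \<in> {i - 1, i}")
    case True
    have "(\<Sum>l<n. ?f l) = (\<Sum>l\<in>{i - 1, i}. ?f l)"
      by (rule sum.mono_neutral_right) (use i jk True in \<open>auto simp: index_local2\<close>)
    also have "\<dots> = ?f (i - 1) + ?f i"
      using i by simp
    finally show ?thesis
      using prod i jk True by (auto simp: index_local2)
  next
    case False
    have "(\<Sum>l<n. ?f l) = (\<Sum>l\<in>{k}. ?f l)"
      by (rule sum.mono_neutral_right) (use i jk False in \<open>auto simp: index_local2\<close>)
    then show ?thesis
      using prod jk False by (auto simp: index_local2)
  qed
qed

lemma local2_one: "1 \<le> i \<Longrightarrow> local2 n i (1\<^sub>m 2) = 1\<^sub>m n"
  by (rule eq_matI) (auto simp: index_local2)

lemma local2_1_eq_local2_2_imp_one: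
  assumes "3 \<le> n" and "A \<in> carrier_mat 2 2" and eq: "local2 n 1 A = local2 n 2 A"
  shows "A = 1\<^sub>m 2"
proof (rule eq_matI)
  have "local2 n 1 A $$ (j, k) = local2 n 2 A $$ (j, k)" for j k
    using eq by simp
  from this[of 0 0] this[of 0 1] this[of 1 0] this[of 2 2]
  show "A $$ (j, k) = 1\<^sub>m 2 $$ (j, k)" if "j < dim_row (1\<^sub>m 2)" "k < dim_col (1\<^sub>m 2)" for j k
    using that assms(1) by (auto simp: index_local2 less_2_cases_iff)
qed (use assms(2) in auto)

lemma dim_mat2 [simp]: "dim_row (mat2 a b c d) = 2" "dim_col (mat2 a b c d) = 2"
  unfolding mat2_def mat_of_rows_list_def by auto

lemma index_mat2 [simp]:
  "j < 2 \<Longrightarrow> k < 2 \<Longrightarrow> mat2 a b c d $$ (j, k) =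
    (if j = 0 then if k = 0 then a else b else if k = 0 then c else d)"
  unfolding mat2_def mat_of_rows_list_def by (auto simp: less_2_cases_iff)

lemma mat2_entries: "A \<in> carrier_mat 2 2 \<Longrightarrow> A = mat2 (A $$ (0, 0)) (A $$ (0, 1)) (A $$ (1, 0)) (A $$ (1, 1))"
  by (rule eq_matI) (auto simp: less_2_cases_iff)

lemma mat2_eq_iff: "mat2 a b c d = mat2 a' b' c' d' \<longleftrightarrow> a = a' \<and> b = b' \<and> c = c' \<and> d = d'"
  by (auto dest: arg_cong[where f = "\<lambda>M. (M $$ (0, 0), M $$ (0, 1), M $$ (1, 0), M $$ (1, 1))"])

lemma one_mat2: "1\<^sub>m 2 = mat2 1 0 0 1"
  by (rule eq_matI) (auto simp: less_2_cases_iff)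

lemma mat2_mult:
  "mat2 a b c d * mat2 a' b' c' d' = mat2 (a * a' + b * c') (a * b' + b * d') (c * a' + d * c') (c * b' + d * d')"
  by (rule eq_matI) (auto simp: less_2_cases_iff scalar_prod_def numeral_2_eq_2)

lemma invertible_mat2_det_nonzero:
  fixes A :: "complex mat"
  assumes A: "A \<in> carrier_mat 2 2" and "invertible_mat A"
  shows "A $$ (0, 0) * A $$ (1, 1) - A $$ (0, 1) * A $$ (1, 0) \<noteq> 0"
proof -
  obtain B where AB: "A * B = 1\<^sub>m 2" and BA: "B * A = 1\<^sub>m (dim_row B)"
    using assms unfolding invertible_mat_def inverts_mat_def by auto
  have B: "B \<in> carrier_mat 2 2"
    using arg_cong[OF AB, of dim_col] arg_cong[OF BA, of dim_col] A by auto
  define a b c d where A_entries: "a = A $$ (0, 0)" "b = A $$ (0, 1)" "c = A $$ (1, 0)" "d = A $$ (1, 1)"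
  define e f g h where B_entries: "e = B $$ (0, 0)" "f = B $$ (0, 1)" "g = B $$ (1, 0)" "h = B $$ (1, 1)"
  have "mat2 a b c d * mat2 e f g h = mat2 1 0 0 1"
    using AB mat2_entries[OF A] mat2_entries[OF B] unfolding A_entries B_entries by (simp add: one_mat2)
  then have "a * e + b * g = 1" "a * f + b * h = 0" "c * e + d * g = 0" "c * f + d * h = 1"
    by (simp_all add: mat2_mult mat2_eq_iff)
  moreover have "(a * d - b * c) * (e * h - f * g) =
      (a * e + b * g) * (c * f + d * h) - (a * f + b * h) * (c * e + d * g)"
    by (simp add: algebra_simps)
  ultimately have "(a * d - b * c) * (e * h - f * g) = 1"
    by simp
  then show ?thesis
    unfolding A_entries by auto
qed

lemma involutive_braid_coeffs:
  fixes a b c d :: "'a :: {idom, ring_char_0}"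
  assumes sq00: "a * a + b * c = 1" and sq11: "c * b + d * d = 1"
    and sq01: "a * b + b * d = 0" and sq10: "c * a + d * c = 0"
    and br00: "a * a + a * b * c = a" and br22: "b * c * d + d * d = d"
  shows "(a = 1 \<and> b = 0 \<and> c = 0 \<and> d = 1) \<or> (a = 0 \<and> d = 0 \<and> b * c = 1)"
proof (cases "a = 0")
  case True
  with sq00 sq11 show ?thesis by (simp add: mult.commute)
next
  case False
  have "a * (a + b * c - 1) = 0"
    using br00 by (simp add: algebra_simps)
  with False have "a + b * c = 1" by simp
  with sq00 have "a * a = a" by (metis add_right_cancel)
  with False have a: "a = 1" by simp
  with sq00 have bc: "b * c = 0" by simp
  with sq11 br22 have "d * d = 1" "d * d = d" by (simp_all add: mult.commute)
  then have d: "d = 1" by simp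
  from sq01 sq10 have "b = 0" "c = 0"
    unfolding a d by simp_all
  with a d show ?thesis by simp
qed

lemma local2_involutive_braid_cases:
  assumes n: "3 \<le> n" and R: "R \<in> carrier_mat 2 2"
    and braid: "local2 n 1 R * local2 n 2 R * local2 n 1 R = local2 n 2 R * local2 n 1 R * local2 n 2 R"
    and invol: "local2 n 1 R * local2 n 1 R = 1\<^sub>m n"
  shows "R = 1\<^sub>m 2 \<or> (\<exists>r. r \<noteq> 0 \<and> R = mat2 0 r (1 / r) 0)"
proof -
  define a b c d where R_entries: "a = R $$ (0, 0)" "b = R $$ (0, 1)" "c = R $$ (1, 0)" "d = R $$ (1, 1)"
  have br: "(local2 n 1 R * local2 n 2 R * local2 n 1 R) $$ (j, j) =
      (local2 n 2 R * local2 n 1 R * local2 n 2 R) $$ (j, j)" for j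
    using braid by simp
  have sq: "(local2 n 1 R * local2 n 1 R) $$ (j, k) = 1\<^sub>m n $$ (j, k)" for j k
    using invol by simp
  note entries = index_mult_local2 index_local2 R_entries
  have "a * a + b * c = 1" "c * b + d * d = 1" "a * b + b * d = 0" "c * a + d * c = 0"
    using sq[of 0 0] sq[of 1 1] sq[of 0 1] sq[of 1 0] n by (simp_all del: index_mult_mat add: entries)
  moreover have "a * a + a * b * c = a" "b * c * d + d * d = d"
    using br[of 0] br[of 2] n
    by (simp_all del: index_mult_mat
        add: entries mult_carrier_mat[OF local2_carrier local2_carrier] algebra_simps)
  ultimately consider "a = 1" "b = 0" "c = 0" "d = 1" | "a = 0" "d = 0" "b * c = 1"
    using involutive_braid_coeffs by blast
  moreover have R_abcd: "R = mat2 a b c d"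
    using mat2_entries[OF R] unfolding R_entries .
  ultimately show ?thesis
  proof cases
    case 1
    then show ?thesis
      using R_abcd by (simp add: one_mat2)
  next
    case 2
    then have "b \<noteq> 0" "c = 1 / b"
      by (auto simp: eq_divide_eq mult.commute)
    then show ?thesis
      using R_abcd 2 by blast
  qed
qed

lemma homog_2local_rep_relations_at_1:
  assumes rep: "homog_2local_rep n c R S" and n: "3 \<le> n"
  shows "R \<in> carrier_mat 2 2"
    and "t \<in> {1..c} \<Longrightarrow> S t \<in> carrier_mat 2 2 \<and> invertible_mat (S t)"
    and "local2 n 1 R * local2 n 2 R * local2 n 1 R = local2 n 2 R * local2 n 1 R * local2 n 2 R"
    and "local2 n 1 R * local2 n 1 R = 1\<^sub>m n"
    and "t \<in> {1..c} \<Longrightarrow>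
      local2 n 1 R * local2 n 2 R * local2 n 1 (S t) = local2 n 2 (S t) * local2 n 1 R * local2 n 2 R"
  using rep n unfolding homog_2local_rep_def Let_def
  by (auto dest!: spec[of _ 1] simp: numeral_2_eq_2)

lemma nontrivial_homog_2local_rep_R_ne_one:
  assumes n: "3 \<le> n" and rep: "homog_2local_rep n c R S" and nontriv: "nontrivial_rep n c R S"
  shows "R \<noteq> 1\<^sub>m 2"
proof
  assume R_one: "R = 1\<^sub>m 2"
  have "S t = 1\<^sub>m 2" if t: "t \<in> {1..c}" for t
  proof (rule local2_1_eq_local2_2_imp_one[OF n])
    show "S t \<in> carrier_mat 2 2"
      using homog_2local_rep_relations_at_1(2)[OF rep n t] by blast
    show "local2 n 1 (S t) = local2 n 2 (S t)"
      using homog_2local_rep_relations_at_1(5)[OF rep n t] by (simp add: R_one local2_one)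
  qed
  with R_one nontriv show False
    by (simp add: nontrivial_rep_def local2_one)
qed

theorem theorem3p1:
  fixes n c :: nat and R :: "complex mat" and S :: "nat \<Rightarrow> complex mat"
  assumes "n \<ge> 3" and "c \<ge> 1"
    and "homog_2local_rep n c R S"
    and "nontrivial_rep n c R S"
  shows "\<exists>P Q r2 s1 s2 s3 s4.
     P \<in> carrier_mat n n \<and> Q \<in> carrier_mat n n \<and> P * Q = 1\<^sub>m n \<and> Q * P = 1\<^sub>m n \<and>
     r2 \<noteq> 0 \<and> (\<forall>t\<in>{1..c}. s1 t * s4 t - s2 t * s3 t \<noteq> 0) \<and>
     (\<forall>i\<in>{1..n-1}. P * local2 n i R * Q = local2 n i (mat2 0 r2 (1 / r2) 0)) \<and>
     (\<forall>i\<in>{1..n-1}. \<forall>t\<in>{1..c}.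
        P * local2 n i (S t) * Q = local2 n i (mat2 (s1 t) (s2 t) (s3 t) (s4 t)))"
proof -
  note rels = homog_2local_rep_relations_at_1[OF assms(3,1)]
  obtain r where r: "r \<noteq> 0" "R = mat2 0 r (1 / r) 0"
    using local2_involutive_braid_cases[OF assms(1) rels(1,3,4)]
      nontrivial_homog_2local_rep_R_ne_one[OF assms(1,3,4)] by blast
  define s where "s j k t = S t $$ (j, k)" for j k t
  have det: "s 0 0 t * s 1 1 t - s 0 1 t * s 1 0 t \<noteq> 0" if "t \<in> {1..c}" for t
    using invertible_mat2_det_nonzero rels(2)[OF that] unfolding s_def by blast
  have S_eq: "S t = mat2 (s 0 0 t) (s 0 1 t) (s 1 0 t) (s 1 1 t)" if "t \<in> {1..c}" for t
    using mat2_entries rels(2)[OF that] unfolding s_def by blast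
  show ?thesis
    by (rule exI[of _ "1\<^sub>m n"], rule exI[of _ "1\<^sub>m n"], rule exI[of _ r],
        rule exI[of _ "s 0 0"], rule exI[of _ "s 0 1"], rule exI[of _ "s 1 0"], rule exI[of _ "s 1 1"])
      (use r det S_eq in auto)
qed

end
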